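(* Let $(E,d)$ be a metric space whose Borel $\sigma$-algebra $\mathcal{B}(E)$ makes it a standard Borel space, let $\nu$ be a Radon probability measure, and let $A\subset\mathrm{Supp}(\nu)$ be closed. If the MaxEnt posterior $\nu(\cdot\mid A)$ exists, then $\nu(\cdot\mid A)$ is a Radon probability measure and $\nu(E\setminus A\mid A)=0$.
   Context: Fix $R>0$. For each $\sigma>0$ consider $\inf_\mu\{\mathrm{Ent}_\nu(\mu):\mu(E)=1,\ \int_E d_R(x,A)^2\,d\mu(x)\le\sigma^2\}$, with $d(x,A)=\inf_{y\in A}d(x,y)$, $d_R=\min(d,R)$, $\mathrm{Ent}_\nu(\mu)=\int\frac{d\mu}{d\nu}\ln\frac{d\mu}{d\nu}\,d\nu$ if $\mu\ll\nu$, $+\infty$ otherwise. If for every $\sigma>0$ the infimum is attained by a unique $\mu_\sigma$ and $\mu_\sigma$ converges weakly as $\sigma\to0$, the limit is the MaxEnt posterior $\nu(\cdot\mid A)$. $\mathrm{Supp}(\nu)$ is the complement of the union of all $\nu$-null open sets. *)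

theory Defs
  imports "HOL-Probability.Probability"
begin

text \<open>The measurable space (E, B(E)) (E = UNIV of a metric type, B(E) = borel) is standard
  Borel: B(E) is the Borel sigma-algebra of some Polish topology on E.\<close>
definition standard_borel_space :: "'a::metric_space itself \<Rightarrow> bool" where
  "standard_borel_space _ \<longleftrightarrow>
     (\<exists>X :: 'a topology. topspace X = UNIV \<and> completely_metrizable_space X \<and> separable_space X
        \<and> sigma_sets UNIV {U. openin X U} = sets (borel :: 'a measure))"

definition radon_measure :: "'a::metric_space measure \<Rightarrow> bool" where
  "radon_measure \<mu> \<longleftrightarrow> sets \<mu> = sets borel \<and> finite_measure \<mu> \<and>
     (\<forall>B\<in>sets borel. emeasure \<mu> B = (SUP K\<in>{K. compact K \<and> K \<subseteq> B}. emeasure \<mu> K))"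

definition supp :: "'a::topological_space measure \<Rightarrow> 'a set" where
  "supp \<nu> = - \<Union>{U. open U \<and> emeasure \<nu> U = 0}"

text \<open>Truncated distance d_R(x,A) = min(d(x,A),R), with the convention d(x,{}) = +\<infinity>.\<close>
definition distR :: "real \<Rightarrow> 'a::metric_space set \<Rightarrow> 'a \<Rightarrow> real" where
  "distR R A x = (if A = {} then R else min (infdist x A) R)"

text \<open>Relative entropy Ent_nu(mu) = int (dmu/dnu) ln (dmu/dnu) dnu if mu << nu, +\<infinity> otherwise.
  The negative part of t ln t is bounded, so non-integrability means the integral is +\<infinity>.\<close>
definition rel_entropy :: "'a measure \<Rightarrow> 'a measure \<Rightarrow> ereal" where
  "rel_entropy \<nu> \<mu> =
     (if absolutely_continuous \<nu> \<mu> then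
        (let g = (\<lambda>x. enn2real (RN_deriv \<nu> \<mu> x) * ln (enn2real (RN_deriv \<nu> \<mu> x)))
         in if integrable \<nu> g then ereal (integral\<^sup>L \<nu> g) else \<infinity>)
      else \<infinity>)"

definition maxent_feasible :: "real \<Rightarrow> 'a::metric_space set \<Rightarrow> real \<Rightarrow> 'a measure \<Rightarrow> bool" where
  "maxent_feasible R A \<sigma> \<mu> \<longleftrightarrow> sets \<mu> = sets borel \<and> prob_space \<mu> \<and>
     integral\<^sup>L \<mu> (\<lambda>x. (distR R A x)\<^sup>2) \<le> \<sigma>\<^sup>2"

definition maxent_minimizer ::
  "'a::metric_space measure \<Rightarrow> real \<Rightarrow> 'a set \<Rightarrow> real \<Rightarrow> 'a measure \<Rightarrow> bool" where
  "maxent_minimizer \<nu> R A \<sigma> \<mu> \<longleftrightarrow> maxent_feasible R A \<sigma> \<mu> \<and>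
     rel_entropy \<nu> \<mu> = (INF \<mu>'\<in>{\<mu>'. maxent_feasible R A \<sigma> \<mu>'}. rel_entropy \<nu> \<mu>')"

definition weak_conv_at_0 :: "(real \<Rightarrow> 'a::metric_space measure) \<Rightarrow> 'a measure \<Rightarrow> bool" where
  "weak_conv_at_0 \<mu>s \<pi> \<longleftrightarrow> sets \<pi> = sets borel \<and> finite_measure \<pi> \<and>
     (\<forall>f::'a \<Rightarrow> real. continuous_on UNIV f \<and> bounded (range f) \<longrightarrow>
        ((\<lambda>\<sigma>. integral\<^sup>L (\<mu>s \<sigma>) f) \<longlongrightarrow> integral\<^sup>L \<pi> f) (at_right 0))"

definition maxent_posterior ::
  "'a::metric_space measure \<Rightarrow> real \<Rightarrow> 'a set \<Rightarrow> 'a measure \<Rightarrow> bool" where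
  "maxent_posterior \<nu> R A \<pi> \<longleftrightarrow>
     (\<forall>\<sigma>>0. \<exists>!\<mu>. maxent_minimizer \<nu> R A \<sigma> \<mu>) \<and>
     weak_conv_at_0 (\<lambda>\<sigma>. THE \<mu>. maxent_minimizer \<nu> R A \<sigma> \<mu>) \<pi>"

end

theory Submission
  imports Defs
begin

text \<open>
  The limit \<open>\<pi>\<close> is a probability measure because the minimisers are, and it is carried by \<open>A\<close>
  because the constraint \<open>\<integral> min(d(x,A),R)\<^sup>2 d\<mu>\<^sub>\<sigma> \<le> \<sigma>\<^sup>2\<close> passes to the weak limit
  (\<open>A \<noteq> {}\<close>, since for \<open>A = {}\<close> the constraint reads \<open>R \<le> \<sigma>\<close>).

  The Polish topology whose Borel sets are those of \<open>E\<close> need not be the metric topology of \<open>E\<close>,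
  so Radon-ness of \<open>\<pi>\<close> does not come for free. Since \<open>\<nu>\<close> is Radon, its support is separable,
  so \<open>A\<close> lies in the closure of a countable set \<open>D\<close>, and the balls around points of \<open>D\<close> with
  radii \<open>1/(k+1)\<close> form a countable family \<open>U\<^sub>n\<close> containing a neighbourhood base at every point
  of \<open>A\<close>. A finite Borel measure on a Polish space is tight and approximable by closed and open
  sets; hence every Borel set \<open>B \<subseteq> A\<close> contains sets \<open>K\<close> of almost full measure that are compact
  for the Polish topology and on which every \<open>U\<^sub>n\<close> is relatively open. On such a \<open>K\<close> the metric
  topology is coarser than the Polish one, so \<open>K\<close> is compact.
\<close>

section \<open>Approximation by closed and open sets\<close>

lemma measure_UN_le_geometric:
  assumes "finite_measure \<mu>" and "\<And>n. X n \<in> sets \<mu>"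
    and "\<And>n. measure \<mu> (X n) \<le> c * (1/2)^n"
  shows "measure \<mu> (\<Union>n. X n) \<le> 2 * c"
proof -
  interpret finite_measure \<mu> by fact
  have geom: "(\<lambda>n. c * (1/2)^n) sums (c * 2)"
    using sums_mult[OF geometric_sums[of "1/2::real"], of c] by simp
  have summable: "summable (\<lambda>n. measure \<mu> (X n))"
    by (rule summable_comparison_test[OF _ sums_summable[OF geom]]) (use assms(3) in auto)
  have "measure \<mu> (\<Union>n. X n) \<le> (\<Sum>n. measure \<mu> (X n))"
    using assms(2) summable by (intro finite_measure_subadditive_countably) auto
  also have "\<dots> \<le> (\<Sum>n. c * (1/2)^n)"
    by (rule suminf_le[OF assms(3) summable sums_summable[OF geom]])
  finally show ?thesis
    using sums_unique[OF geom] by simp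
qed

lemma (in finite_measure) obtain_measure_UN_Diff_less:
  assumes "range A \<subseteq> sets M" and "incseq A" and "e > 0"
  obtains N where "measure M ((\<Union>n. A n) - A N) < e"
proof -
  obtain N where "\<bar>measure M (A N) - measure M (\<Union>n. A n)\<bar> < e"
    using LIMSEQ_D[OF finite_Lim_measure_incseq[OF assms(1,2)] assms(3)] by auto
  moreover have "measure M ((\<Union>n. A n) - A N) = measure M (\<Union>n. A n) - measure M (A N)"
    using assms(1) by (intro finite_measure_Diff) auto
  ultimately show ?thesis
    using that[of N] by linarith
qed

lemma (in finite_measure) measure_le_add_if_subset_Un:
  assumes "A \<subseteq> X \<union> Y" and "X \<in> sets M" and "Y \<in> sets M"
  shows "measure M A \<le> measure M X + measure M Y"
  using assms by (intro order.trans[OF finite_measure_mono measure_Un_le]) auto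

lemma openin_in_sets_sigma:
  assumes "sets \<mu> = sigma_sets (topspace X) {U. openin X U}" and "openin X U"
  shows "U \<in> sets \<mu>"
  unfolding assms(1) using assms(2) by (auto intro: sigma_sets.Basic)

lemma closedin_in_sets_sigma:
  assumes "sets \<mu> = sigma_sets (topspace X) {U. openin X U}" and "closedin X F"
  shows "F \<in> sets \<mu>"
proof -
  have "topspace X - (topspace X - F) \<in> sigma_sets (topspace X) {U. openin X U}"
    using assms(2) unfolding closedin_def by (intro sigma_sets.Compl sigma_sets.Basic) auto
  then show ?thesis
    using closedin_subset[OF assms(2)] unfolding assms(1) by (simp add: double_diff)
qed

definition closed_open_approximable :: "'a topology \<Rightarrow> 'a measure \<Rightarrow> 'a set \<Rightarrow> bool" where
  "closed_open_approximable X \<mu> B \<longleftrightarrow>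
     (\<forall>e>0. \<exists>F G. closedin X F \<and> openin X G \<and> F \<subseteq> B \<and> B \<subseteq> G \<and> measure \<mu> (G - F) < e)"

lemma closed_open_approximableE:
  assumes "closed_open_approximable X \<mu> B" and "e > 0"
  obtains F G where "closedin X F" "openin X G" "F \<subseteq> B" "B \<subseteq> G" "measure \<mu> (G - F) < e"
  using assms unfolding closed_open_approximable_def by auto

lemma closed_open_approximable_seqE:
  assumes "\<And>i. closed_open_approximable X \<mu> (B i)" and "\<And>i. e i > 0"
  obtains F G where "\<And>i. closedin X (F i)" "\<And>i. openin X (G i)" "\<And>i. F i \<subseteq> B i" "\<And>i. B i \<subseteq> G i"
    "\<And>i. measure \<mu> (G i - F i) < e i"
proof -
  have "\<exists>F G. closedin X F \<and> openin X G \<and> F \<subseteq> B i \<and> B i \<subseteq> G \<and> measure \<mu> (G - F) < e i" for i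
    using assms(1)[of i] assms(2)[of i] unfolding closed_open_approximable_def by auto
  then obtain F G where "\<And>i. closedin X (F i)" "\<And>i. openin X (G i)" "\<And>i. F i \<subseteq> B i"
    "\<And>i. B i \<subseteq> G i" "\<And>i. measure \<mu> (G i - F i) < e i"
    by metis
  then show ?thesis
    by (rule that)
qed

lemma closed_open_approximable_empty: "closed_open_approximable X \<mu> {}"
  unfolding closed_open_approximable_def by (metis Diff_empty closedin_empty measure_empty openin_empty order_refl)

lemma closed_open_approximable_Diff_topspace:
  assumes "closed_open_approximable X \<mu> B"
  shows "closed_open_approximable X \<mu> (topspace X - B)"
  unfolding closed_open_approximable_def
proof (intro allI impI)
  fix e :: real
  assume "e > 0"
  with assms obtain F G where FG: "closedin X F" "openin X G" "F \<subseteq> B" "B \<subseteq> G" "measure \<mu> (G - F) < e"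
    by (rule closed_open_approximableE)
  have "(topspace X - F) - (topspace X - G) = G - F"
    using openin_subset[OF FG(2)] by blast
  then have "measure \<mu> ((topspace X - F) - (topspace X - G)) < e"
    using FG(5) by simp
  moreover have "closedin X (topspace X - G)" "openin X (topspace X - F)"
    using FG(1,2) by (simp_all add: closedin_diff openin_diff)
  moreover have "topspace X - G \<subseteq> topspace X - B" "topspace X - B \<subseteq> topspace X - F"
    using FG(3,4) by blast+
  ultimately show "\<exists>F' G'. closedin X F' \<and> openin X G' \<and> F' \<subseteq> topspace X - B \<and>
      topspace X - B \<subseteq> G' \<and> measure \<mu> (G' - F') < e"
    by (intro exI[of _ "topspace X - G"] exI[of _ "topspace X - F"] conjI)
qed

lemma closed_open_approximable_UN:
  assumes "finite_measure \<mu>" and sets: "sets \<mu> = sigma_sets (topspace X) {U. openin X U}"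
    and "\<And>i::nat. closed_open_approximable X \<mu> (B i)"
  shows "closed_open_approximable X \<mu> (\<Union>i. B i)"
  unfolding closed_open_approximable_def
proof (intro allI impI)
  interpret finite_measure \<mu> by fact
  fix e :: real
  assume "e > 0"
  then have pos: "e/4 * (1/2)^i > 0" for i :: nat
    by simp
  obtain F G where F: "\<And>i. closedin X (F i)" and G: "\<And>i. openin X (G i)"
    and FBG: "\<And>i. F i \<subseteq> B i" "\<And>i. B i \<subseteq> G i" and small: "\<And>i. measure \<mu> (G i - F i) < e/4 * (1/2)^i"
    by (erule closed_open_approximable_seqE[OF assms(3) pos])
  have F_sets: "F i \<in> sets \<mu>" and G_sets: "G i \<in> sets \<mu>" for i
    using closedin_in_sets_sigma[OF sets F] openin_in_sets_sigma[OF sets G] by auto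
  define H where "H N = (\<Union>i<N. F i)" for N
  have H_sets: "range H \<subseteq> sets \<mu>"
    unfolding H_def using F_sets by auto
  moreover have "incseq H"
    unfolding incseq_def H_def by (intro allI impI UN_mono) auto
  moreover have "e/2 > 0"
    using \<open>e > 0\<close> by simp
  ultimately obtain N where N: "measure \<mu> ((\<Union>n. H n) - H N) < e/2"
    by (rule obtain_measure_UN_Diff_less)
  have "(\<Union>i. G i) - H N \<subseteq> (\<Union>i. G i - F i) \<union> ((\<Union>n. H n) - H N)"
    unfolding H_def by blast
  then have "measure \<mu> ((\<Union>i. G i) - H N) \<le> measure \<mu> (\<Union>i. G i - F i) + measure \<mu> ((\<Union>n. H n) - H N)"
    using F_sets G_sets H_sets by (intro measure_le_add_if_subset_Un) auto
  moreover have "measure \<mu> (\<Union>i. G i - F i) \<le> 2 * (e/4)"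
    using assms(1) F_sets G_sets small by (intro measure_UN_le_geometric less_imp_le) auto
  ultimately have "measure \<mu> ((\<Union>i. G i) - H N) < e"
    using N by linarith
  moreover have "closedin X (H N)"
    unfolding H_def using F by (intro closedin_Union) auto
  moreover have "H N \<subseteq> (\<Union>i. B i)" "(\<Union>i. B i) \<subseteq> (\<Union>i. G i)"
    unfolding H_def using FBG by blast+
  ultimately show "\<exists>F G. closedin X F \<and> openin X G \<and> F \<subseteq> (\<Union>i. B i) \<and> (\<Union>i. B i) \<subseteq> G \<and>
      measure \<mu> (G - F) < e"
    using G by (intro exI[of _ "H N"] exI[of _ "\<Union>i. G i"]) auto
qed

lemma closed_open_approximable_openin:
  assumes "finite_measure \<mu>" and sets: "sets \<mu> = sigma_sets (topspace X) {U. openin X U}"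
    and "metrizable_space X" and "openin X G"
  shows "closed_open_approximable X \<mu> G"
  unfolding closed_open_approximable_def
proof (intro allI impI)
  interpret finite_measure \<mu> by fact
  fix e :: real
  assume "e > 0"
  obtain F where F: "\<And>n. closedin X (F n)" "\<And>n. F n \<subseteq> F (Suc n)" "(\<Union>n. F n) = G"
    using open_imp_fsigma_in[OF assms(3,4)] unfolding fsigma_in_ascending by blast
  have "range F \<subseteq> sets \<mu>"
    using closedin_in_sets_sigma[OF sets F(1)] by blast
  moreover have "incseq F"
    using F(2) by (rule incseq_SucI)
  ultimately obtain n where "measure \<mu> ((\<Union>n. F n) - F n) < e"
    using \<open>e > 0\<close> by (rule obtain_measure_UN_Diff_less)
  then have "measure \<mu> (G - F n) < e"
    using F(3) by simp
  moreover have "F n \<subseteq> G"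
    using F(3) by blast
  ultimately show "\<exists>F G'. closedin X F \<and> openin X G' \<and> F \<subseteq> G \<and> G \<subseteq> G' \<and> measure \<mu> (G' - F) < e"
    using F(1)[of n] assms(4) by (intro exI[of _ "F n"] exI[of _ G]) auto
qed

lemma closed_open_approximable_sigma_sets:
  assumes "finite_measure \<mu>" and sets: "sets \<mu> = sigma_sets (topspace X) {U. openin X U}"
    and "metrizable_space X" and "B \<in> sets \<mu>"
  shows "closed_open_approximable X \<mu> B"
proof -
  from assms(4) have "B \<in> sigma_sets (topspace X) {U. openin X U}"
    unfolding sets .
  then show ?thesis
  proof (induction rule: sigma_sets.induct)
    case (Basic G)
    then show ?case
      using closed_open_approximable_openin[OF assms(1) sets assms(3)] by simp
  next
    case Empty
    show ?case by (rule closed_open_approximable_empty)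
  next
    case (Compl B)
    then show ?case
      using closed_open_approximable_Diff_topspace by blast
  next
    case (Union B)
    then show ?case
      using closed_open_approximable_UN[OF assms(1) sets] by blast
  qed
qed

lemma openin_subtopology_Int_antimono:
  assumes "openin (subtopology X L) (L \<inter> U)" and "K \<subseteq> L"
  shows "openin (subtopology X K) (K \<inter> U)"
  using assms by (auto simp: openin_subtopology)

section \<open>Tight sets in Polish spaces\<close>

context Metric_space
begin

lemma openin_in_sets:
  assumes "sets \<mu> = sigma_sets M {U. openin mtopology U}" and "openin mtopology U"
  shows "U \<in> sets \<mu>"
  using openin_in_sets_sigma[of \<mu> mtopology U] assms by simp

lemma closedin_in_sets:
  assumes "sets \<mu> = sigma_sets M {U. openin mtopology U}" and "closedin mtopology F"
  shows "F \<in> sets \<mu>"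
  using closedin_in_sets_sigma[of \<mu> mtopology F] assms by simp

lemma closed_open_approximable_mtopology:
  assumes "finite_measure \<mu>" and "sets \<mu> = sigma_sets M {U. openin mtopology U}" and "B \<in> sets \<mu>"
  shows "closed_open_approximable mtopology \<mu> B"
  using closed_open_approximable_sigma_sets[OF assms(1) _ metrizable_space_mtopology assms(3)] assms(2) by simp

lemma mtotally_bounded_if_finite_mball_covers:
  assumes "S \<subseteq> M"
    and "\<And>\<epsilon>. \<epsilon> > 0 \<Longrightarrow> \<exists>C. finite C \<and> C \<subseteq> M \<and> S \<subseteq> (\<Union>x\<in>C. mball x \<epsilon>)"
  shows "mtotally_bounded S"
  unfolding mtotally_bounded_def
proof (intro allI impI)
  fix \<epsilon> :: real
  assume "\<epsilon> > 0"
  then obtain C where C: "finite C" "S \<subseteq> (\<Union>x\<in>C. mball x (\<epsilon>/2))"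
    using assms(2)[of "\<epsilon>/2"] by auto
  define C' where "C' = {x\<in>C. mball x (\<epsilon>/2) \<inter> S \<noteq> {}}"
  have "\<forall>x\<in>C'. \<exists>y. y \<in> mball x (\<epsilon>/2) \<inter> S"
    unfolding C'_def by blast
  then obtain s where s: "\<And>x. x \<in> C' \<Longrightarrow> s x \<in> mball x (\<epsilon>/2) \<inter> S"
    by metis
  have "S \<subseteq> (\<Union>x\<in>s ` C'. mball x \<epsilon>)"
  proof
    fix y
    assume "y \<in> S"
    then obtain x where x: "x \<in> C" "y \<in> mball x (\<epsilon>/2)"
      using C(2) by blast
    with \<open>y \<in> S\<close> have "x \<in> C'"
      unfolding C'_def by blast
    then have sx: "s x \<in> M" "d x (s x) < \<epsilon>/2"
      using s by auto
    have "d (s x) y \<le> d (s x) x + d x y"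
      using x sx by (intro triangle) auto
    also have "\<dots> < \<epsilon>"
      using x sx by (simp add: commute)
    finally have "y \<in> mball (s x) \<epsilon>"
      using x sx by simp
    then show "y \<in> (\<Union>x\<in>s ` C'. mball x \<epsilon>)"
      using \<open>x \<in> C'\<close> by blast
  qed
  moreover have "finite (s ` C')" "s ` C' \<subseteq> S"
    using C(1) s unfolding C'_def by auto
  ultimately show "\<exists>K. finite K \<and> K \<subseteq> S \<and> S \<subseteq> (\<Union>x\<in>K. mball x \<epsilon>)"
    by blast
qed

lemma obtain_finite_mballs_large_measure:
  assumes "finite_measure \<mu>" and sets: "sets \<mu> = sigma_sets M {U. openin mtopology U}"
    and "separable_space mtopology" and "r > 0" and "e > 0"
  obtains C where "finite C" "C \<subseteq> M" "measure \<mu> (M - (\<Union>x\<in>C. mball x r)) < e"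
proof (cases "M = {}")
  case True
  then show ?thesis
    using that[of "{}"] \<open>e > 0\<close> by simp
next
  case False
  interpret finite_measure \<mu> by fact
  obtain D where D: "countable D" "D \<subseteq> M" "mtopology closure_of D = M"
    using assms(3) unfolding separable_space_def by auto
  with False have "D \<noteq> {}"
    by auto
  define C where "C N = from_nat_into D ` {..<N}" for N
  define W where "W N = (\<Union>x\<in>C N. mball x r)" for N
  have "openin mtopology (W N)" for N
    unfolding W_def by blast
  then have "range W \<subseteq> sets \<mu>"
    using openin_in_sets[OF sets] by blast
  moreover have "incseq W"
    unfolding incseq_def W_def C_def by (intro allI impI UN_mono image_mono) auto
  moreover note \<open>e > 0\<close>
  ultimately obtain N where N: "measure \<mu> ((\<Union>N. W N) - W N) < e"
    by (rule obtain_measure_UN_Diff_less)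
  have "(\<Union>N. W N) = M"
  proof (intro equalityI subsetI)
    fix x
    assume "x \<in> M"
    then obtain y where "y \<in> D" "y \<in> mball x r"
      using D(3) \<open>r > 0\<close> unfolding metric_closure_of by blast
    then have "x \<in> W (Suc (to_nat_on D y))"
      unfolding W_def C_def using from_nat_into_to_nat_on[OF D(1)] by (force simp: commute)
    then show "x \<in> (\<Union>N. W N)"
      by blast
  qed (auto simp: W_def)
  with N have "measure \<mu> (M - W N) < e"
    by simp
  moreover have "finite (C N)" "C N \<subseteq> M"
    unfolding C_def using D(2) from_nat_into[OF \<open>D \<noteq> {}\<close>] by auto
  ultimately show ?thesis
    using that unfolding W_def by blast
qed

lemma mtotally_bounded_INT_finite_mballs:
  assumes "\<And>n. finite (C n)" and "\<And>n. C n \<subseteq> M"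
  shows "mtotally_bounded (\<Inter>n. \<Union>x\<in>C n. mball x (1 / Suc n))"
proof (rule mtotally_bounded_if_finite_mball_covers)
  show "(\<Inter>n. \<Union>x\<in>C n. mball x (1 / Suc n)) \<subseteq> M"
    by auto
  fix \<epsilon> :: real
  assume "\<epsilon> > 0"
  then obtain n where "1 / Suc n < \<epsilon>"
    using nat_approx_posE by blast
  then have "(\<Inter>n. \<Union>x\<in>C n. mball x (1 / Suc n)) \<subseteq> (\<Union>x\<in>C n. mball x \<epsilon>)"
    using mball_subset_concentric[of "1 / Suc n" \<epsilon>] by fastforce
  with assms[of n] show "\<exists>C'. finite C' \<and> C' \<subseteq> M \<and>
      (\<Inter>n. \<Union>x\<in>C n. mball x (1 / Suc n)) \<subseteq> (\<Union>x\<in>C'. mball x \<epsilon>)"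
    by blast
qed

lemma obtain_compactin_large_measure:
  assumes "mcomplete" and "separable_space mtopology" and "finite_measure \<mu>"
    and sets: "sets \<mu> = sigma_sets M {U. openin mtopology U}" and "e > 0"
  obtains K where "compactin mtopology K" "measure \<mu> (M - K) < e"
proof -
  interpret finite_measure \<mu> by fact
  have "\<exists>C. finite C \<and> C \<subseteq> M \<and> measure \<mu> (M - (\<Union>x\<in>C. mball x (1 / Suc n))) < e/4 * (1/2)^n"
    for n
    by (rule obtain_finite_mballs_large_measure[OF assms(3) sets assms(2), of "1 / Suc n" "e/4 * (1/2)^n"])
      (use \<open>e > 0\<close> in auto)
  then obtain C where C: "\<And>n. finite (C n)" "\<And>n. C n \<subseteq> M"
    and small: "\<And>n. measure \<mu> (M - (\<Union>x\<in>C n. mball x (1 / Suc n))) < e/4 * (1/2)^n"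
    by metis
  define S where "S = (\<Inter>n. \<Union>x\<in>C n. mball x (1 / Suc n))"
  have "S \<subseteq> M"
    unfolding S_def by auto
  have "mtotally_bounded S"
    unfolding S_def using C by (rule mtotally_bounded_INT_finite_mballs)
  then have compact: "compactin mtopology (mtopology closure_of S)"
    using mtotally_bounded_eq_compact_closure_of[OF assms(1)] by blast
  have M_S: "M - S = (\<Union>n. M - (\<Union>x\<in>C n. mball x (1 / Suc n)))"
    unfolding S_def by blast
  have W_open: "openin mtopology (\<Union>x\<in>C n. mball x (1 / Suc n))" for n
    by blast
  have M_W_sets: "M - (\<Union>x\<in>C n. mball x (1 / Suc n)) \<in> sets \<mu>" for n
    using openin_in_sets[OF sets openin_topspace[of mtopology, unfolded topspace_mtopology]]
      openin_in_sets[OF sets W_open] by (rule sets.Diff)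
  have "measure \<mu> (M - S) \<le> 2 * (e/4)"
    unfolding M_S using small by (intro measure_UN_le_geometric[OF assms(3) M_W_sets] less_imp_le)
  moreover have "measure \<mu> (M - mtopology closure_of S) \<le> measure \<mu> (M - S)"
  proof (rule finite_measure_mono)
    show "M - mtopology closure_of S \<subseteq> M - S"
      using closure_of_subset[of S mtopology] \<open>S \<subseteq> M\<close> by auto
    show "M - S \<in> sets \<mu>"
      unfolding M_S using M_W_sets by blast
  qed
  ultimately show ?thesis
    using that[OF compact] \<open>e > 0\<close> by linarith
qed

lemma obtain_closedin_open_traces:
  assumes "finite_measure \<mu>" and sets: "sets \<mu> = sigma_sets M {U. openin mtopology U}"
    and "\<And>n::nat. U n \<in> sets \<mu>" and "e > 0"
  obtains L where "closedin mtopology L" "measure \<mu> (M - L) < e"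
    "\<forall>n. openin (subtopology mtopology L) (L \<inter> U n)"
proof -
  interpret finite_measure \<mu> by fact
  have pos: "e/4 * (1/2)^n > 0" for n :: nat
    using \<open>e > 0\<close> by simp
  obtain F G where F: "\<And>n. closedin mtopology (F n)" and G: "\<And>n. openin mtopology (G n)"
    and FUG: "\<And>n. F n \<subseteq> U n" "\<And>n. U n \<subseteq> G n" and small: "\<And>n. measure \<mu> (G n - F n) < e/4 * (1/2)^n"
    by (erule closed_open_approximable_seqE[OF closed_open_approximable_mtopology[OF assms(1) sets assms(3)] pos])
  define L where "L = (\<Inter>n. F n \<union> (M - G n))"
  have F_sets: "F n \<in> sets \<mu>" and G_sets: "G n \<in> sets \<mu>" for n
    using closedin_in_sets[OF sets F] openin_in_sets[OF sets G] by auto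
  have "closedin mtopology (F n \<union> (M - G n))" for n
    using F[of n] G[of n] closedin_topspace[of mtopology] by (simp add: closedin_Un closedin_diff)
  then have closed: "closedin mtopology L"
    unfolding L_def by (intro closedin_Inter) auto
  have "M - L \<subseteq> (\<Union>n. G n - F n)"
    unfolding L_def by blast
  then have "measure \<mu> (M - L) \<le> measure \<mu> (\<Union>n. G n - F n)"
    using F_sets G_sets by (intro finite_measure_mono) auto
  also have "\<dots> \<le> 2 * (e/4)"
    using F_sets G_sets small by (intro measure_UN_le_geometric[OF assms(1)] less_imp_le) auto
  finally have "measure \<mu> (M - L) < e"
    using \<open>e > 0\<close> by linarith
  moreover have "L \<inter> U n = L \<inter> G n" for n
    unfolding L_def using FUG by blast
  then have "\<forall>n. openin (subtopology mtopology L) (L \<inter> U n)"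
    using openin_subtopology_Int2[OF G] by simp
  ultimately show ?thesis
    by (rule that[OF closed])
qed

lemma obtain_closedin_subset_open_traces:
  assumes "finite_measure \<mu>" and sets: "sets \<mu> = sigma_sets M {U. openin mtopology U}"
    and "B \<in> sets \<mu>" and "\<And>n::nat. U n \<in> sets \<mu>" and "e > 0"
  obtains L where "closedin mtopology L" "L \<subseteq> B" "measure \<mu> (B - L) < e"
    "\<forall>n. openin (subtopology mtopology L) (L \<inter> U n)"
proof -
  interpret finite_measure \<mu> by fact
  have "e/2 > 0"
    using \<open>e > 0\<close> by simp
  obtain F G where F: "closedin mtopology F" "F \<subseteq> B" and G: "openin mtopology G" "B \<subseteq> G"
    and FG: "measure \<mu> (G - F) < e/2"
    using closed_open_approximable_mtopology[OF assms(1) sets assms(3)] \<open>e/2 > 0\<close>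
    by (rule closed_open_approximableE)
  obtain L where L: "closedin mtopology L" "measure \<mu> (M - L) < e/2"
    and traces: "\<forall>n. openin (subtopology mtopology L) (L \<inter> U n)"
    by (rule obtain_closedin_open_traces[OF assms(1) sets assms(4) \<open>e/2 > 0\<close>])
  have "closedin mtopology (F \<inter> L)"
    using F(1) L(1) by (rule closedin_Int)
  moreover have "F \<inter> L \<subseteq> B"
    using F(2) by blast
  moreover have "measure \<mu> (B - F \<inter> L) < e"
  proof -
    have "{U. openin mtopology U} \<subseteq> Pow M"
      using openin_subset by force
    then have "B \<subseteq> M"
      using assms(3) unfolding sets by (rule sigma_sets_into_sp)
    then have "B - F \<inter> L \<subseteq> (G - F) \<union> (M - L)"
      using G(2) by blast
    moreover have "G - F \<in> sets \<mu>"
      using openin_in_sets[OF sets G(1)] closedin_in_sets[OF sets F(1)] by (rule sets.Diff)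
    moreover have "M - L \<in> sets \<mu>"
      using openin_in_sets[OF sets openin_topspace[of mtopology, unfolded topspace_mtopology]]
        closedin_in_sets[OF sets L(1)]
      by (rule sets.Diff)
    ultimately have "measure \<mu> (B - F \<inter> L) \<le> measure \<mu> (G - F) + measure \<mu> (M - L)"
      by (rule measure_le_add_if_subset_Un)
    then show ?thesis
      using FG L(2) by linarith
  qed
  moreover have "\<forall>n. openin (subtopology mtopology (F \<inter> L)) ((F \<inter> L) \<inter> U n)"
    using openin_subtopology_Int_antimono[OF traces[rule_format], of "F \<inter> L"] by blast
  ultimately show ?thesis
    by (rule that)
qed

lemma obtain_compactin_subset_open_traces:
  assumes "mcomplete" and "separable_space mtopology" and "finite_measure \<mu>"
    and sets: "sets \<mu> = sigma_sets M {U. openin mtopology U}"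
    and "B \<in> sets \<mu>" and "\<And>n::nat. U n \<in> sets \<mu>" and "e > 0"
  obtains K where "compactin mtopology K" "K \<subseteq> B" "measure \<mu> (B - K) < e"
    "\<forall>n. openin (subtopology mtopology K) (K \<inter> U n)"
proof -
  interpret finite_measure \<mu> by fact
  have "e/2 > 0"
    using \<open>e > 0\<close> by simp
  obtain L where L: "closedin mtopology L" "L \<subseteq> B" "measure \<mu> (B - L) < e/2"
    and traces: "\<forall>n. openin (subtopology mtopology L) (L \<inter> U n)"
    by (rule obtain_closedin_subset_open_traces[OF assms(3-6) \<open>e/2 > 0\<close>])
  obtain K0 where K0: "compactin mtopology K0" "measure \<mu> (M - K0) < e/2"
    by (rule obtain_compactin_large_measure[OF assms(1-4) \<open>e/2 > 0\<close>])
  have "compactin mtopology (L \<inter> K0)"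
    using L(1) K0(1) by (rule closed_Int_compactin)
  moreover have "L \<inter> K0 \<subseteq> B"
    using L(2) by blast
  moreover have "measure \<mu> (B - L \<inter> K0) < e"
  proof -
    have "B - L \<inter> K0 \<subseteq> (B - L) \<union> (M - K0)"
      using L(2) openin_subset closedin_subset[OF L(1)] by auto
    moreover have "B - L \<in> sets \<mu>"
      using assms(5) closedin_in_sets[OF sets L(1)] by (rule sets.Diff)
    moreover have "M - K0 \<in> sets \<mu>"
      using openin_in_sets[OF sets openin_topspace[of mtopology, unfolded topspace_mtopology]]
        closedin_in_sets[OF sets compactin_imp_closedin[OF Hausdorff_space_mtopology K0(1)]]
      by (rule sets.Diff)
    ultimately have "measure \<mu> (B - L \<inter> K0) \<le> measure \<mu> (B - L) + measure \<mu> (M - K0)"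
      by (rule measure_le_add_if_subset_Un)
    then show ?thesis
      using L(3) K0(2) by linarith
  qed
  moreover have "\<forall>n. openin (subtopology mtopology (L \<inter> K0)) ((L \<inter> K0) \<inter> U n)"
    using openin_subtopology_Int_antimono[OF traces[rule_format], of "L \<inter> K0"] by blast
  ultimately show ?thesis
    by (rule that)
qed

end

section \<open>Radon measures\<close>

text \<open>Each open \<open>V\<close> meets \<open>K\<close> in a union of traces \<open>K \<inter> U i\<close>, so on \<open>K\<close> the topology of
  the type is coarser than the one induced by \<open>X\<close>.\<close>

lemma compact_if_compactin_open_traces:
  fixes K :: "'a::topological_space set" and U :: "'i \<Rightarrow> 'a set"
  assumes "compactin X K"
    and traces: "\<And>i. openin (subtopology X K) (K \<inter> U i)"
    and base: "\<And>x V. x \<in> K \<Longrightarrow> open V \<Longrightarrow> x \<in> V \<Longrightarrow> \<exists>i. x \<in> U i \<and> U i \<subseteq> V"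
  shows "compact K"
proof -
  have topspace: "topspace (subtopology X K) = K"
    using compactin_subset_topspace[OF assms(1)] by (rule topspace_subtopology_subset)
  have "openin (subtopology X K) (K \<inter> V)" if "open V" for V
  proof -
    have "K \<inter> V = (\<Union>i\<in>{i. U i \<subseteq> V}. K \<inter> U i)"
      using base[OF _ that] by blast
    moreover have "openin (subtopology X K) (\<Union>i\<in>{i. U i \<subseteq> V}. K \<inter> U i)"
      using traces by (intro openin_Union) auto
    ultimately show ?thesis
      by (simp only:)
  qed
  then have "continuous_map (subtopology X K) euclidean id"
    unfolding continuous_map_def topspace by (simp add: Int_def)
  moreover have "compactin (subtopology X K) K"
    using assms(1) by (simp add: compactin_subtopology)
  ultimately have "compactin euclidean (id ` K)"
    by (intro image_compactin)
  then show ?thesis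
    by simp
qed

lemma obtain_countable_base_at_closure:
  fixes D :: "'a::metric_space set"
  assumes "countable D"
  obtains U :: "nat \<Rightarrow> 'a set" where "\<And>n. open (U n)"
    "\<And>x V. x \<in> closure D \<Longrightarrow> open V \<Longrightarrow> x \<in> V \<Longrightarrow> \<exists>n. x \<in> U n \<and> U n \<subseteq> V"
proof
  \<comment> \<open>For \<open>D = {}\<close> the centre \<open>from_nat_into D i\<close> is unspecified, which is harmless since
    \<open>closure D = {}\<close>.\<close>
  define U where "U n = ball (from_nat_into D (fst (prod_decode n))) (1 / Suc (snd (prod_decode n)))"
    for n
  show "open (U n)" for n
    unfolding U_def by simp
  fix x V
  assume x: "x \<in> closure D" and "open V" "x \<in> V"
  then obtain r where r: "r > 0" "ball x r \<subseteq> V"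
    using open_contains_ball by blast
  then obtain k where k: "1 / Suc k < r/2"
    using nat_approx_posE[of "r/2"] by auto
  then obtain a where a: "a \<in> D" "dist a x < 1 / Suc k"
    using x unfolding closure_approachable by (metis of_nat_0_less_iff zero_less_Suc zero_less_divide_1_iff)
  define n where "n = prod_encode (to_nat_on D a, k)"
  have U_n: "U n = ball a (1 / Suc k)"
    unfolding U_def n_def using from_nat_into_to_nat_on[OF assms a(1)] by simp
  have "U n \<subseteq> ball x r"
  proof
    fix y
    assume "y \<in> U n"
    then have "dist a y < 1 / Suc k"
      unfolding U_n by simp
    moreover have "dist x y \<le> dist a x + dist a y"
      using dist_triangle[of x y a] by (simp add: dist_commute)
    ultimately show "y \<in> ball x r"
      using a(2) k by simp
  qed
  moreover have "x \<in> U n"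
    unfolding U_n using a(2) by simp
  ultimately show "\<exists>n. x \<in> U n \<and> U n \<subseteq> V"
    using r(2) by blast
qed

lemma radon_measureI:
  fixes \<pi> :: "'a::metric_space measure"
  assumes "sets \<pi> = sets borel" and "finite_measure \<pi>"
    and approx: "\<And>B e. B \<in> sets borel \<Longrightarrow> e > 0 \<Longrightarrow>
      \<exists>K. compact K \<and> K \<subseteq> B \<and> measure \<pi> B \<le> measure \<pi> K + e"
  shows "radon_measure \<pi>"
  unfolding radon_measure_def
proof (intro conjI ballI assms(1,2))
  interpret finite_measure \<pi> by fact
  fix B :: "'a set"
  assume B: "B \<in> sets borel"
  show "emeasure \<pi> B = (SUP K\<in>{K. compact K \<and> K \<subseteq> B}. emeasure \<pi> K)"
  proof (rule ennreal_approx_SUP)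
    fix K
    assume "K \<in> {K. compact K \<and> K \<subseteq> B}"
    then show "emeasure \<pi> K \<le> emeasure \<pi> B"
      using B assms(1) by (intro emeasure_mono) auto
  next
    fix e :: real
    assume "e > 0"
    then obtain K where K: "compact K" "K \<subseteq> B" "measure \<pi> B \<le> measure \<pi> K + e"
      using approx[OF B] by blast
    then have "emeasure \<pi> B \<le> emeasure \<pi> K + ennreal e"
      using \<open>e > 0\<close> by (simp add: emeasure_eq_measure ennreal_plus[symmetric] del: ennreal_plus)
    then show "\<exists>K\<in>{K. compact K \<and> K \<subseteq> B}. emeasure \<pi> B \<le> emeasure \<pi> K + ennreal e"
      using K(1,2) by blast
  qed
qed

lemma standard_borel_space_obtain_Polish_metric:
  assumes "standard_borel_space TYPE('a::metric_space)"
  obtains m :: "'a::metric_space \<Rightarrow> 'a \<Rightarrow> real" where "Metric_space UNIV m" "Metric_space.mcomplete UNIV m"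
    "separable_space (Metric_space.mtopology UNIV m)"
    "sets (borel :: 'a measure) = sigma_sets UNIV {U. openin (Metric_space.mtopology UNIV m) U}"
proof -
  obtain X :: "'a topology" where X: "topspace X = UNIV" "completely_metrizable_space X"
    "separable_space X" "sigma_sets UNIV {U. openin X U} = sets borel"
    using assms unfolding standard_borel_space_def by auto
  then obtain M m where "Metric_space M m" "Metric_space.mcomplete M m"
    and X_def: "X = Metric_space.mtopology M m"
    unfolding completely_metrizable_space_def by auto
  moreover have "M = UNIV"
    using X(1) \<open>Metric_space M m\<close> unfolding X_def by (simp add: Metric_space.topspace_mtopology)
  ultimately show ?thesis
    using X(3,4) that by simp
qed

lemma radon_measure_if_standard_borel_separable_support:
  fixes \<pi> :: "'a::metric_space measure"
  assumes "standard_borel_space TYPE('a)" and borel: "sets \<pi> = sets borel" and "finite_measure \<pi>"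
    and "countable D" and null: "emeasure \<pi> (- closure D) = 0"
  shows "radon_measure \<pi>"
proof (rule radon_measureI[OF borel assms(3)])
  interpret finite_measure \<pi> by fact
  obtain m where "Metric_space UNIV m" "Metric_space.mcomplete UNIV m"
    and separable: "separable_space (Metric_space.mtopology UNIV m)"
    and borel_Polish: "sets (borel :: 'a measure) = sigma_sets UNIV {U. openin (Metric_space.mtopology UNIV m) U}"
    using standard_borel_space_obtain_Polish_metric[OF assms(1)] by blast
  interpret Polish: Metric_space UNIV m by fact
  obtain U :: "nat \<Rightarrow> 'a set" where "\<And>n. open (U n)"
    and base: "\<And>x V. x \<in> closure D \<Longrightarrow> open V \<Longrightarrow> x \<in> V \<Longrightarrow> \<exists>n. x \<in> U n \<and> U n \<subseteq> V"
    by (erule obtain_countable_base_at_closure[OF assms(4)])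
  then have U_sets: "U n \<in> sets \<pi>" for n
    using borel by simp
  fix B :: "'a set" and e :: real
  assume "B \<in> sets borel" and "e > 0"
  then have "B \<inter> closure D \<in> sets \<pi>"
    using borel by simp
  obtain K where K: "compactin Polish.mtopology K"
    "K \<subseteq> B \<inter> closure D" "measure \<pi> (B \<inter> closure D - K) < e"
    and traces: "\<forall>n. openin (subtopology Polish.mtopology K) (K \<inter> U n)"
    by (rule Polish.obtain_compactin_subset_open_traces[OF \<open>Polish.mcomplete\<close> separable assms(3)
        borel[unfolded borel_Polish] \<open>B \<inter> closure D \<in> sets \<pi>\<close> U_sets \<open>e > 0\<close>])
  have "compact K"
  proof (rule compact_if_compactin_open_traces[OF K(1) traces[rule_format]])
    fix x V
    assume "x \<in> K" "open V" "x \<in> V"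
    then show "\<exists>n. x \<in> U n \<and> U n \<subseteq> V"
      using K(2) by (intro base) auto
  qed
  then have K_sets: "K \<in> sets \<pi>"
    using borel by (simp add: borel_closed compact_imp_closed)
  have "B - K \<subseteq> (B \<inter> closure D - K) \<union> - closure D"
    by blast
  then have "measure \<pi> (B - K) \<le> measure \<pi> (B \<inter> closure D - K) + measure \<pi> (- closure D)"
    using \<open>B \<inter> closure D \<in> sets \<pi>\<close> K_sets borel by (intro measure_le_add_if_subset_Un) auto
  moreover have "measure \<pi> (- closure D) = 0"
    using null by (simp add: measure_def)
  moreover have "measure \<pi> (B - K) = measure \<pi> B - measure \<pi> K"
    using borel \<open>B \<in> sets borel\<close> K_sets K(2) by (intro finite_measure_Diff) auto
  ultimately show "\<exists>K. compact K \<and> K \<subseteq> B \<and> measure \<pi> B \<le> measure \<pi> K + e"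
    using \<open>compact K\<close> K(2,3) by (intro exI[of _ K]) auto
qed

lemma radon_measure_obtain_compact:
  fixes \<nu> :: "'a::metric_space measure"
  assumes "radon_measure \<nu>" and "e > 0"
  obtains K where "compact K" "measure \<nu> (- K) < e"
proof -
  have borel: "sets \<nu> = sets borel" and "finite_measure \<nu>"
    and inner: "emeasure \<nu> UNIV = (SUP K\<in>{K. compact K \<and> K \<subseteq> UNIV}. emeasure \<nu> K)"
    using assms(1) unfolding radon_measure_def by auto
  interpret finite_measure \<nu> by fact
  have "{K. compact K \<and> K \<subseteq> UNIV} \<noteq> {}"
    using compact_empty by blast
  from SUP_approx_ennreal[OF assms(2) this inner] emeasure_finite[of UNIV]
  obtain K where K: "compact K" "emeasure \<nu> UNIV < emeasure \<nu> K + ennreal e"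
    by auto
  have K_sets: "K \<in> sets \<nu>"
    using borel K(1) by (simp add: borel_closed compact_imp_closed)
  have "measure \<nu> UNIV < measure \<nu> K + e"
    using K(2) assms(2)
    by (simp add: emeasure_eq_measure ennreal_plus[symmetric] ennreal_less_iff del: ennreal_plus)
  moreover have "UNIV \<in> sets \<nu>"
    using sets.top[of \<nu>] sets_eq_imp_space_eq[OF borel] by simp
  then have "measure \<nu> (- K) = measure \<nu> UNIV - measure \<nu> K"
    using finite_measure_Diff[OF _ K_sets] by (simp add: Compl_eq_Diff_UNIV)
  ultimately show ?thesis
    using that[OF K(1)] by linarith
qed

lemma radon_measure_obtain_sigma_compact:
  fixes \<nu> :: "'a::metric_space measure"
  assumes "radon_measure \<nu>"
  obtains K :: "nat \<Rightarrow> 'a set" where "\<And>n. compact (K n)" "emeasure \<nu> (- (\<Union>n. K n)) = 0"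
proof -
  have borel: "sets \<nu> = sets borel" and "finite_measure \<nu>"
    using assms unfolding radon_measure_def by auto
  interpret finite_measure \<nu> by fact
  have "\<exists>K. compact K \<and> measure \<nu> (- K) < 1 / Suc n" for n
    by (rule radon_measure_obtain_compact[OF assms, of "1 / Suc n"]) auto
  then obtain K where K: "\<And>n. compact (K n)" "\<And>n. measure \<nu> (- K n) < 1 / Suc n"
    by metis
  have small: "measure \<nu> (- (\<Union>n. K n)) < 1 / Suc n" for n
  proof -
    have "- K n \<in> sets \<nu>"
      using borel K(1)[of n] by (simp add: borel_open open_Compl compact_imp_closed)
    then have "measure \<nu> (- (\<Union>n. K n)) \<le> measure \<nu> (- K n)"
      by (intro finite_measure_mono) auto
    then show ?thesis
      using K(2)[of n] by linarith
  qed
  have "measure \<nu> (- (\<Union>n. K n)) \<le> 0"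
  proof (rule ccontr)
    assume "\<not> measure \<nu> (- (\<Union>n. K n)) \<le> 0"
    then obtain n where "1 / Suc n < measure \<nu> (- (\<Union>n. K n))"
      using nat_approx_posE[of "measure \<nu> (- (\<Union>n. K n))"] by auto
    with small[of n] show False
      by linarith
  qed
  then have "measure \<nu> (- (\<Union>n. K n)) = 0"
    using measure_nonneg[of \<nu> "- (\<Union>n. K n)"] by linarith
  then have "emeasure \<nu> (- (\<Union>n. K n)) = 0"
    by (simp add: emeasure_eq_measure)
  with K(1) show ?thesis
    by (rule that)
qed

lemma compact_obtain_countable_dense:
  fixes K :: "'a::metric_space set"
  assumes "compact K"
  obtains D where "countable D" "K \<subseteq> closure D"
proof -
  have "\<exists>F. finite F \<and> K \<subseteq> (\<Union>x\<in>F. ball x (1 / Suc j))" for j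
    using seq_compact_imp_totally_bounded[OF compact_imp_seq_compact[OF assms], rule_format, of "1 / Suc j"]
    by auto
  then obtain F where F: "\<And>j. finite (F j)" "\<And>j. K \<subseteq> (\<Union>x\<in>F j. ball x (1 / Suc j))"
    by metis
  have "K \<subseteq> closure (\<Union>j. F j)"
  proof
    fix x
    assume "x \<in> K"
    show "x \<in> closure (\<Union>j. F j)"
      unfolding closure_approachable
    proof (intro allI impI)
      fix \<epsilon> :: real
      assume "\<epsilon> > 0"
      then obtain j where "1 / Suc j < \<epsilon>"
        using nat_approx_posE by blast
      moreover obtain y where "y \<in> F j" "dist y x < 1 / Suc j"
        using F(2)[of j] \<open>x \<in> K\<close> by auto
      ultimately have "y \<in> (\<Union>j. F j)" "dist y x < \<epsilon>"
        by auto
      then show "\<exists>y\<in>\<Union>j. F j. dist y x < \<epsilon>"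
        by blast
    qed
  qed
  moreover have "countable (\<Union>j. F j)"
    using F(1) by (simp add: countable_finite)
  ultimately show ?thesis
    using that by blast
qed

lemma radon_measure_obtain_countable_supp:
  fixes \<nu> :: "'a::metric_space measure"
  assumes "radon_measure \<nu>"
  obtains D where "countable D" "supp \<nu> \<subseteq> closure D"
proof -
  have borel: "sets \<nu> = sets borel"
    using assms unfolding radon_measure_def by auto
  obtain K :: "nat \<Rightarrow> 'a set" where K: "\<And>n. compact (K n)" and null: "emeasure \<nu> (- (\<Union>n. K n)) = 0"
    using radon_measure_obtain_sigma_compact[OF assms] by blast
  have "\<exists>D. countable D \<and> K n \<subseteq> closure D" for n
    by (rule compact_obtain_countable_dense[OF K(1)[of n]]) blast
  then obtain D where D: "\<And>n. countable (D n)" "\<And>n. K n \<subseteq> closure (D n)"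
    by metis
  have "K n \<subseteq> closure (\<Union>n. D n)" for n
    using D(2)[of n] closure_mono[of "D n" "\<Union>n. D n"] by blast
  then have "emeasure \<nu> (- closure (\<Union>n. D n)) \<le> emeasure \<nu> (- (\<Union>n. K n))"
    using borel K by (intro emeasure_mono) (auto simp: borel_open open_Compl compact_imp_closed)
  then have "emeasure \<nu> (- closure (\<Union>n. D n)) = 0"
    using null by simp
  moreover have "open (- closure (\<Union>n. D n))"
    by (rule open_Compl) simp
  ultimately have "supp \<nu> \<subseteq> closure (\<Union>n. D n)"
    unfolding supp_def by blast
  moreover have "countable (\<Union>n. D n)"
    using D(1) by (intro countable_UN) auto
  ultimately show ?thesis
    using that by blast
qed

section \<open>The MaxEnt posterior\<close>

lemma maxent_feasible_empty_imp_abs_le: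
  assumes "maxent_feasible R {} \<sigma> \<mu>"
  shows "\<bar>R\<bar> \<le> \<bar>\<sigma>\<bar>"
proof -
  have "prob_space \<mu>" and "integral\<^sup>L \<mu> (\<lambda>x. (distR R {} x)\<^sup>2) \<le> \<sigma>\<^sup>2"
    using assms unfolding maxent_feasible_def by auto
  then have "R\<^sup>2 \<le> \<sigma>\<^sup>2"
    unfolding distR_def by (simp add: prob_space.prob_space)
  then show ?thesis
    by (simp add: abs_le_square_iff)
qed

lemma maxent_posterior_feasible:
  assumes "maxent_posterior \<nu> R A \<pi>" and "\<sigma> > 0"
  shows "maxent_feasible R A \<sigma> (THE \<mu>. maxent_minimizer \<nu> R A \<sigma> \<mu>)"
proof -
  have "\<exists>!\<mu>. maxent_minimizer \<nu> R A \<sigma> \<mu>"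
    using assms unfolding maxent_posterior_def by blast
  then show ?thesis
    using theI'[of "maxent_minimizer \<nu> R A \<sigma>"] unfolding maxent_minimizer_def by blast
qed

lemma weak_conv_at_0_prob_space:
  assumes "weak_conv_at_0 \<mu>s \<pi>" and "\<forall>\<^sub>F \<sigma> in at_right 0. prob_space (\<mu>s \<sigma>)"
  shows "prob_space \<pi>"
proof -
  have "finite_measure \<pi>"
    and lim: "\<And>g::'a \<Rightarrow> real. continuous_on UNIV g \<Longrightarrow> bounded (range g) \<Longrightarrow>
      ((\<lambda>\<sigma>. integral\<^sup>L (\<mu>s \<sigma>) g) \<longlongrightarrow> integral\<^sup>L \<pi> g) (at_right 0)"
    using assms(1) unfolding weak_conv_at_0_def by auto
  have "((\<lambda>\<sigma>. integral\<^sup>L (\<mu>s \<sigma>) (\<lambda>_. 1::real)) \<longlongrightarrow> integral\<^sup>L \<pi> (\<lambda>_. 1)) (at_right 0)"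
    by (rule lim) auto
  moreover have "\<forall>\<^sub>F \<sigma> in at_right 0. integral\<^sup>L (\<mu>s \<sigma>) (\<lambda>_. 1::real) = 1"
    using assms(2) by eventually_elim (simp add: prob_space.prob_space)
  ultimately have "((\<lambda>_::real. 1::real) \<longlongrightarrow> integral\<^sup>L \<pi> (\<lambda>_. 1)) (at_right 0)"
    by (rule Lim_transform_eventually)
  then have "integral\<^sup>L \<pi> (\<lambda>_. 1::real) = 1"
    using tendsto_unique[OF trivial_limit_at_right_real _ tendsto_const] by blast
  then show ?thesis
    using \<open>finite_measure \<pi>\<close> by (intro prob_spaceI) (simp add: finite_measure.emeasure_eq_measure)
qed

lemma weak_conv_at_0_integral_le_0:
  assumes "weak_conv_at_0 \<mu>s \<pi>" and "continuous_on UNIV f" and "bounded (range f)"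
    and "\<forall>\<^sub>F \<sigma> in at_right 0. integral\<^sup>L (\<mu>s \<sigma>) f \<le> \<sigma>\<^sup>2"
  shows "integral\<^sup>L \<pi> f \<le> 0"
proof (rule tendsto_le[OF trivial_limit_at_right_real _ _ assms(4)])
  show "((\<lambda>\<sigma>. integral\<^sup>L (\<mu>s \<sigma>) f) \<longlongrightarrow> integral\<^sup>L \<pi> f) (at_right 0)"
    using assms(1-3) unfolding weak_conv_at_0_def by blast
  show "((\<lambda>\<sigma>::real. \<sigma>\<^sup>2) \<longlongrightarrow> 0) (at_right 0)"
    by (intro tendsto_eq_intros) (auto intro: tendsto_ident_at)
qed

lemma emeasure_Diff_closed_eq_0_if_integral_infdist_le_0:
  fixes \<pi> :: "'a::metric_space measure"
  assumes "finite_measure \<pi>" and borel: "sets \<pi> = sets borel"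
    and "closed A" and "A \<noteq> {}" and "R > 0"
    and "integral\<^sup>L \<pi> (\<lambda>x. (min (infdist x A) R)\<^sup>2) \<le> 0"
  shows "emeasure \<pi> (UNIV - A) = 0"
proof -
  interpret finite_measure \<pi> by fact
  define f where "f x = (min (infdist x A) R)\<^sup>2" for x
  have f_bounds: "0 \<le> f x" "f x \<le> R\<^sup>2" for x
    unfolding f_def using \<open>R > 0\<close> infdist_nonneg[of x A] by (auto intro: power_mono)
  have "f \<in> borel_measurable \<pi>"
    unfolding measurable_cong_sets[OF borel refl] f_def by (intro borel_measurable_continuous_onI continuous_intros)
  then have "integrable \<pi> f"
    using f_bounds by (intro integrable_const_bound[where B="R\<^sup>2"]) auto
  moreover have "integral\<^sup>L \<pi> f = 0"
    using assms(6) f_bounds Bochner_Integration.integral_nonneg[of \<pi> f] unfolding f_def by fastforce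
  ultimately have "AE x in \<pi>. f x = 0"
    using integral_nonneg_eq_0_iff_AE[of \<pi> f] f_bounds by simp
  then have "AE x in \<pi>. x \<in> A"
  proof (rule AE_mp, intro AE_I2 impI)
    fix x
    assume "f x = 0"
    then have "infdist x A = 0"
      unfolding f_def using \<open>R > 0\<close> by (simp add: min_def split: if_splits)
    then show "x \<in> A"
      using in_closure_iff_infdist_zero[OF assms(4)] closure_closed[OF assms(3)] by simp
  qed
  then show ?thesis
    using AE_iff_measurable[of "UNIV - A" \<pi> "\<lambda>x. x \<in> A"] assms(3) borel sets_eq_imp_space_eq[OF borel]
    by auto
qed

lemma maxent_posterior_eventually_feasible:
  assumes "maxent_posterior \<nu> R A \<pi>"
  shows "\<forall>\<^sub>F \<sigma> in at_right 0. maxent_feasible R A \<sigma> (THE \<mu>. maxent_minimizer \<nu> R A \<sigma> \<mu>)"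
  using eventually_at_right_less[of "0::real"]
  by eventually_elim (rule maxent_posterior_feasible[OF assms])

lemma maxent_posterior_prob_space:
  assumes "maxent_posterior \<nu> R A \<pi>"
  shows "prob_space \<pi>"
proof (rule weak_conv_at_0_prob_space)
  show "weak_conv_at_0 (\<lambda>\<sigma>. THE \<mu>. maxent_minimizer \<nu> R A \<sigma> \<mu>) \<pi>"
    using assms unfolding maxent_posterior_def by blast
  show "\<forall>\<^sub>F \<sigma> in at_right 0. prob_space (THE \<mu>. maxent_minimizer \<nu> R A \<sigma> \<mu>)"
    using maxent_posterior_eventually_feasible[OF assms]
    by eventually_elim (simp add: maxent_feasible_def)
qed

lemma maxent_posterior_null_outside:
  assumes "maxent_posterior \<nu> R A \<pi>" and "R > 0" and "closed A"
  shows "emeasure \<pi> (UNIV - A) = 0"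
proof -
  have weak: "weak_conv_at_0 (\<lambda>\<sigma>. THE \<mu>. maxent_minimizer \<nu> R A \<sigma> \<mu>) \<pi>"
    using assms(1) unfolding maxent_posterior_def by blast
  then have borel: "sets \<pi> = sets borel" and "finite_measure \<pi>"
    unfolding weak_conv_at_0_def by auto
  have "A \<noteq> {}"
  proof
    assume "A = {}"
    then have "\<bar>R\<bar> \<le> \<bar>R/2\<bar>"
      using maxent_posterior_feasible[OF assms(1), of "R/2"] \<open>R > 0\<close>
      by (intro maxent_feasible_empty_imp_abs_le) simp_all
    then show False
      using \<open>R > 0\<close> by simp
  qed
  then have distR_eq: "distR R A x = min (infdist x A) R" for x
    unfolding distR_def by simp
  have "(min (infdist x A) R)\<^sup>2 \<le> R\<^sup>2" for x
    using \<open>R > 0\<close> infdist_nonneg[of x A] by (auto intro: power_mono)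
  then have "bounded (range (\<lambda>x. (min (infdist x A) R)\<^sup>2))"
    unfolding bounded_iff by (intro exI[of _ "R\<^sup>2"]) auto
  moreover have "\<forall>\<^sub>F \<sigma> in at_right 0.
      integral\<^sup>L (THE \<mu>. maxent_minimizer \<nu> R A \<sigma> \<mu>) (\<lambda>x. (min (infdist x A) R)\<^sup>2) \<le> \<sigma>\<^sup>2"
    using maxent_posterior_eventually_feasible[OF assms(1)]
    by eventually_elim (simp add: maxent_feasible_def distR_eq)
  ultimately have "integral\<^sup>L \<pi> (\<lambda>x. (min (infdist x A) R)\<^sup>2) \<le> 0"
    by (intro weak_conv_at_0_integral_le_0[OF weak] continuous_intros)
  then show ?thesis
    by (rule emeasure_Diff_closed_eq_0_if_integral_infdist_le_0[OF \<open>finite_measure \<pi>\<close> borel assms(3)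
          \<open>A \<noteq> {}\<close> assms(2)])
qed

theorem proposition3p7:
  fixes \<nu> \<pi> :: "'a::metric_space measure" and A :: "'a set" and R :: real
  assumes "R > 0"
    and "standard_borel_space TYPE('a)"
    and "sets \<nu> = sets borel" and "prob_space \<nu>" and "radon_measure \<nu>"
    and "closed A" and "A \<subseteq> supp \<nu>"
    and "maxent_posterior \<nu> R A \<pi>"
  shows "radon_measure \<pi> \<and> prob_space \<pi> \<and> emeasure \<pi> (UNIV - A) = 0"
proof -
  have prob: "prob_space \<pi>"
    using assms(8) by (rule maxent_posterior_prob_space)
  have null: "emeasure \<pi> (UNIV - A) = 0"
    using assms(8,1,6) by (rule maxent_posterior_null_outside)
  obtain D where "countable D" and "supp \<nu> \<subseteq> closure D"
    using assms(5) by (rule radon_measure_obtain_countable_supp)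
  have borel: "sets \<pi> = sets borel"
    using assms(8) unfolding maxent_posterior_def weak_conv_at_0_def by blast
  have "emeasure \<pi> (- closure D) \<le> emeasure \<pi> (UNIV - A)"
    using \<open>supp \<nu> \<subseteq> closure D\<close> assms(6,7) borel by (intro emeasure_mono) auto
  then have "emeasure \<pi> (- closure D) = 0"
    using null by simp
  then have "radon_measure \<pi>"
    using assms(2) borel prob_space.finite_measure[OF prob] \<open>countable D\<close>
    by (rule radon_measure_if_standard_borel_separable_support[rotated 4])
  with prob null show ?thesis
    by blast
qed

end
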